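(* Let $M$ be a real representable (loopless) matroid. Then $M$ is strictly uniformly dense if and only if $M$ has a projection representation (a real symmetric matrix $T$ with $T^2=T$ whose nonsingular $\operatorname{rank}(M)\times\operatorname{rank}(M)$ principal submatrices $T_{BB}$ are exactly those indexed by bases $B$) whose diagonal entries are all equal to $\rho(M)^{-1}$.
   Context: A matroid $M$ on ground set $E$ ($|E|=n$) of rank $k$ is real representable if some real full-rank $k\times n$ matrix $X$ satisfies: a $k$-subset $B$ is a basis iff $\det(X_B)\neq 0$. Loopless: every element is in some basis. Density $\rho(M)=|E|/\operatorname{rank}(E)$. The base polytope $P(M)$ is the convex hull of indicator vectors of bases. $M$ is strictly uniformly dense if the point $(\rho(M)^{-1},\dots,\rho(M)^{-1})$ lies in the relative interior of $P(M)$; equivalently, there is a measure $\mu$ on the bases with $\mu(B)>0$ for every basis $B$ such that $\mu(\{B: B\ni e\})$ is the same for all $e\in E$. *)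

theory Defs
  imports "HOL-Analysis.Analysis"
begin

text \<open>The ground set is UNIV of a finite linearly ordered type; the linear order
  is only used to list the elements of a subset when forming submatrices.\<close>

definition det_k :: "nat \<Rightarrow> (nat \<Rightarrow> nat \<Rightarrow> real) \<Rightarrow> real" where
  "det_k k A = (\<Sum>p | p permutes {..<k}. of_int (sign p) * (\<Prod>i<k. A i (p i)))"

definition col_submat :: "(nat \<Rightarrow> 'e::linorder \<Rightarrow> real) \<Rightarrow> 'e set \<Rightarrow> nat \<Rightarrow> nat \<Rightarrow> real" where
  "col_submat X B = (\<lambda>i j. X i (sorted_list_of_set B ! j))"

definition principal_submat :: "('e::linorder \<Rightarrow> 'e \<Rightarrow> real) \<Rightarrow> 'e set \<Rightarrow> nat \<Rightarrow> nat \<Rightarrow> real" where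
  "principal_submat T B = (\<lambda>i j. T (sorted_list_of_set B ! i) (sorted_list_of_set B ! j))"

definition full_row_rank :: "nat \<Rightarrow> (nat \<Rightarrow> 'e::finite \<Rightarrow> real) \<Rightarrow> bool" where
  "full_row_rank k X \<longleftrightarrow>
     (\<forall>c::nat \<Rightarrow> real. (\<forall>e. (\<Sum>i<k. c i * X i e) = 0) \<longrightarrow> (\<forall>i<k. c i = 0))"

definition real_representable :: "('e::{finite,linorder}) set set \<Rightarrow> bool" where
  "real_representable bases \<longleftrightarrow>
     (\<exists>k X. full_row_rank k X \<and>
        (\<forall>B. B \<in> bases \<longleftrightarrow> card B = k \<and> det_k k (col_submat X B) \<noteq> 0))"

definition loopless :: "'e set set \<Rightarrow> bool" where
  "loopless bases \<longleftrightarrow> (\<forall>e. \<exists>B\<in>bases. e \<in> B)"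

definition matroid_rank :: "('e::finite) set set \<Rightarrow> nat" where
  "matroid_rank bases = Max (card ` bases)"

definition density :: "('e::finite) set set \<Rightarrow> real" where
  "density bases = real CARD('e) / real (matroid_rank bases)"

definition indicator_vec :: "('e::finite) set \<Rightarrow> real ^ 'e" where
  "indicator_vec B = (\<chi> e. if e \<in> B then 1 else 0)"

definition base_polytope :: "('e::finite) set set \<Rightarrow> (real ^ 'e) set" where
  "base_polytope bases = convex hull (indicator_vec ` bases)"

definition strictly_uniformly_dense :: "('e::finite) set set \<Rightarrow> bool" where
  "strictly_uniformly_dense bases \<longleftrightarrow>
     (\<chi> e. inverse (density bases)) \<in> rel_interior (base_polytope bases)"

definition projection_representation ::
  "('e::{finite,linorder}) set set \<Rightarrow> ('e \<Rightarrow> 'e \<Rightarrow> real) \<Rightarrow> bool" where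
  "projection_representation bases T \<longleftrightarrow>
     (\<forall>e f. T e f = T f e) \<and>
     (\<forall>e f. (\<Sum>g\<in>UNIV. T e g * T g f) = T e f) \<and>
     (\<forall>B. card B = matroid_rank bases \<longrightarrow>
        (det_k (matroid_rank bases) (principal_submat T B) \<noteq> 0 \<longleftrightarrow> B \<in> bases))"

end

(* Let X be a k x E matrix whose nonzero k-minors are exactly the bases, and P = X^T (X X^T)^-1 X
   the orthogonal projection onto its row space.  By Cauchy-Binet, P_BB has determinant
   det(X_B)^2 / det(X X^T), and P_ee is the probability that e lies in a basis drawn from the
   determinantal measure B |-> det(X_B)^2; so P is a projection representation whose diagonal is
   the vector of marginals of that measure.

   If the constant vector 1/rho lies in the relative interior of the base polytope, the convex
   function t |-> sum_B det(X_B)^2 exp(<1_B - 1/rho, t>) attains its minimum, and its vanishing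
   gradient says that after scaling column f of X by exp(t_f / 2) all marginals equal 1/rho.
   Conversely, a projection representation T with diagonal 1/rho has trace rank(M), so it is the
   projection onto the row space of its rows indexed by any basis, and B |-> det T_BB is a measure
   that is positive exactly on the bases and has the marginals T_ee = 1/rho. *)

theory Submission
  imports Defs "Jordan_Normal_Form.Determinant"
begin

section \<open>Square matrices given as functions\<close>

definition mat_of :: "nat \<Rightarrow> (nat \<Rightarrow> nat \<Rightarrow> real) \<Rightarrow> real mat" where
  "mat_of k A = Matrix.mat k k (\<lambda>(i, j). A i j)"

lemma mat_of_carrier [simp]: "mat_of k A \<in> carrier_mat k k"
  by (simp add: mat_of_def)

lemma det_k_eq_det: "det_k k A = det (mat_of k A)"
  unfolding det_k_def Determinant.det_def mat_of_def by (simp add: atLeast0LessThan)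

lemma det_k_cong:
  assumes "\<And>i j. i < k \<Longrightarrow> j < k \<Longrightarrow> A i j = B i j"
  shows "det_k k A = det_k k B"
proof -
  have "mat_of k A = mat_of k B"
    by (rule eq_matI) (simp_all add: mat_of_def assms)
  then show ?thesis by (simp add: det_k_eq_det)
qed

lemma det_k_identical_rows:
  assumes "i1 < k" "i2 < k" "i1 \<noteq> i2" "\<And>j. A i1 j = A i2 j"
  shows "det_k k A = 0"
proof -
  have "row (mat_of k A) i1 = row (mat_of k A) i2"
    by (rule eq_vecI) (simp_all add: mat_of_def row_def assms)
  then show ?thesis
    unfolding det_k_eq_det by (rule det_identical_rows[OF mat_of_carrier assms(3,1,2)])
qed

lemma det_k_permute_rows:
  assumes p: "p permutes {..<k}"
  shows "det_k k (\<lambda>i j. A (p i) j) = of_int (sign p) * det_k k A"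
proof -
  have "i < k \<Longrightarrow> p i < k" for i
    using permutes_in_image[OF p] by simp
  then have "mat_of k (\<lambda>i j. A (p i) j) = Matrix.mat k k (\<lambda>(i, j). mat_of k A $$ (p i, j))"
    by (intro eq_matI) (simp_all add: mat_of_def)
  then show ?thesis
    using det_permute_rows[OF mat_of_carrier, of p k A] p
    by (simp add: det_k_eq_det atLeast0LessThan)
qed

lemma det_k_transpose: "det_k k (\<lambda>i j. A j i) = det_k k A"
proof -
  have "mat_of k (\<lambda>i j. A j i) = transpose_mat (mat_of k A)"
    by (rule eq_matI) (simp_all add: mat_of_def)
  then show ?thesis by (simp add: det_k_eq_det det_transpose[OF mat_of_carrier])
qed

lemma det_k_eq_0_if_kernel:
  assumes "\<And>i. i < k \<Longrightarrow> (\<Sum>j<k. A i j * v j) = 0" and "l < k" "v l \<noteq> 0"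
  shows "det_k k A = 0"
proof -
  let ?v = "Matrix.vec k v"
  have "?v \<in> carrier_vec k"
    by simp
  moreover have "?v \<noteq> 0\<^sub>v k"
  proof
    assume "?v = 0\<^sub>v k"
    then have "?v $ l = 0\<^sub>v k $ l" by simp
    then show False using assms(2,3) by simp
  qed
  moreover have "mat_of k A *\<^sub>v ?v = 0\<^sub>v k"
  proof (rule eq_vecI)
    fix i assume "i < dim_vec (0\<^sub>v k :: real vec)"
    then have "i < k" by simp
    then show "(mat_of k A *\<^sub>v ?v) $ i = 0\<^sub>v k $ i"
      using assms(1) by (simp add: mat_of_def scalar_prod_def atLeast0LessThan row_def)
  qed (simp add: mat_of_def)
  ultimately show ?thesis
    unfolding det_k_eq_det using det_0_iff_vec_prod_zero_field[OF mat_of_carrier] by blast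
qed

lemma det_k_scale_cols: "det_k k (\<lambda>i j. A i j * c j) = (\<Prod>j<k. c j) * det_k k A"
proof -
  have "(\<Prod>i<k. A i (p i) * c (p i)) = (\<Prod>j<k. c j) * (\<Prod>i<k. A i (p i))"
    if p: "p permutes {..<k}" for p
    using prod.permute[OF p, of c] by (simp add: prod.distrib comp_def)
  then show ?thesis
    unfolding det_k_def sum_distrib_left by (intro sum.cong) simp_all
qed

text \<open>A \<open>k \<times> n\<close> matrix is a function on \<open>nat \<times> 'e\<close> that vanishes on the rows \<open>i \<ge> k\<close>.
  \<open>id_k\<close> and \<open>inv_k\<close> follow this convention, which makes \<open>id_k k\<close> a unit for \<open>mat_prod {..<k}\<close>.\<close>

definition mat_prod :: "'b set \<Rightarrow> ('a \<Rightarrow> 'b \<Rightarrow> real) \<Rightarrow> ('b \<Rightarrow> 'c \<Rightarrow> real) \<Rightarrow> 'a \<Rightarrow> 'c \<Rightarrow> real" where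
  "mat_prod S A B = (\<lambda>i j. \<Sum>l\<in>S. A i l * B l j)"

definition mtransp :: "('a \<Rightarrow> 'b \<Rightarrow> real) \<Rightarrow> 'b \<Rightarrow> 'a \<Rightarrow> real" where
  "mtransp A = (\<lambda>i j. A j i)"

definition id_k :: "nat \<Rightarrow> nat \<Rightarrow> nat \<Rightarrow> real" where
  "id_k k = (\<lambda>i j. if i = j \<and> i < k then 1 else 0)"

lemma mat_prod_assoc:
  assumes "finite S" "finite T"
  shows "mat_prod T (mat_prod S A B) C = mat_prod S A (mat_prod T B C)"
proof (intro ext)
  fix i j
  have "(\<Sum>m\<in>T. (\<Sum>l\<in>S. A i l * B l m) * C m j) = (\<Sum>m\<in>T. \<Sum>l\<in>S. A i l * (B l m * C m j))"
    by (simp add: sum_distrib_right mult.assoc)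
  also have "\<dots> = (\<Sum>l\<in>S. A i l * (\<Sum>m\<in>T. B l m * C m j))"
    by (subst sum.swap) (simp add: sum_distrib_left)
  finally show "mat_prod T (mat_prod S A B) C i j = mat_prod S A (mat_prod T B C) i j"
    by (simp add: mat_prod_def)
qed

lemma mtransp_mtransp [simp]: "mtransp (mtransp A) = A"
  by (simp add: mtransp_def)

lemma mtransp_mat_prod: "mtransp (mat_prod S A B) = mat_prod S (mtransp B) (mtransp A)"
  by (simp add: mtransp_def mat_prod_def mult.commute)

lemma mtransp_id_k [simp]: "mtransp (id_k k) = id_k k"
  by (intro ext) (auto simp: mtransp_def id_k_def)

lemma mat_prod_id_k_left:
  assumes "\<And>i j. k \<le> i \<Longrightarrow> A i j = 0"
  shows "mat_prod {..<k} (id_k k) A = A"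
proof (intro ext)
  fix i j
  have "(\<Sum>l<k. (if i = l \<and> i < k then 1 else 0) * A l j) = (if i < k then A i j else 0)"
    by (simp add: if_distrib[of "\<lambda>x. x * _"] sum.delta cong: if_cong)
  then show "mat_prod {..<k} (id_k k) A i j = A i j"
    using assms[of i] by (auto simp: mat_prod_def id_k_def)
qed

lemma mat_prod_id_k_right:
  assumes "\<And>i j. k \<le> j \<Longrightarrow> A i j = 0"
  shows "mat_prod {..<k} A (id_k k) = A"
proof (intro ext)
  fix i j
  have "(\<Sum>l<k. A i l * (if l = j \<and> l < k then 1 else 0)) = (if j < k then A i j else 0)"
    by (simp add: if_distrib[of "\<lambda>x. _ * x"] sum.delta' cong: if_cong)
  then show "mat_prod {..<k} A (id_k k) i j = A i j"
    using assms[of j] by (auto simp: mat_prod_def id_k_def)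
qed

lemma mat_of_eqD: "mat_of k A = mat_of k B \<Longrightarrow> i < k \<Longrightarrow> j < k \<Longrightarrow> A i j = B i j"
  by (drule arg_cong[where f = "\<lambda>M. M $$ (i, j)"]) (simp add: mat_of_def)

lemma mat_of_mat_prod: "mat_of k (mat_prod {..<k} A B) = mat_of k A * mat_of k B"
  by (rule eq_matI) (simp_all add: mat_of_def mat_prod_def scalar_prod_def atLeast0LessThan)

lemma det_k_mat_prod: "det_k k (mat_prod {..<k} A B) = det_k k A * det_k k B"
  by (simp add: det_k_eq_det mat_of_mat_prod det_mult[OF mat_of_carrier mat_of_carrier])

lemma mat_of_id_k: "mat_of k (id_k k) = 1\<^sub>m k"
  by (rule eq_matI) (simp_all add: mat_of_def id_k_def)

lemma det_k_id_k [simp]: "det_k k (id_k k) = 1"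
  by (simp add: det_k_eq_det mat_of_id_k)

definition inv_k :: "nat \<Rightarrow> (nat \<Rightarrow> nat \<Rightarrow> real) \<Rightarrow> nat \<Rightarrow> nat \<Rightarrow> real" where
  "inv_k k M = (\<lambda>i j. if i < k \<and> j < k then adj_mat (mat_of k M) $$ (i, j) / det_k k M else 0)"

lemma inv_k_vanishes: "k \<le> i \<or> k \<le> j \<Longrightarrow> inv_k k M i j = 0"
  by (auto simp: inv_k_def)

lemma smult_inverse_det_smult:
  "d \<noteq> 0 \<Longrightarrow> (1 / d) \<cdot>\<^sub>m (d \<cdot>\<^sub>m 1\<^sub>m k) = (1\<^sub>m k :: real mat)"
  by (intro eq_matI) auto

lemma mat_of_inv_k: "mat_of k (inv_k k M) = (1 / det_k k M) \<cdot>\<^sub>m adj_mat (mat_of k M)"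
  using adj_mat(1)[OF mat_of_carrier, of k M]
  by (intro eq_matI) (auto simp: mat_of_def inv_k_def)

lemma mat_prod_eq_id_k_if_mat_of:
  assumes prod: "mat_of k A * mat_of k B = 1\<^sub>m k"
    and A: "\<And>i j. k \<le> i \<Longrightarrow> A i j = 0" and B: "\<And>i j. k \<le> j \<Longrightarrow> B i j = 0"
  shows "mat_prod {..<k} A B = id_k k"
proof (intro ext)
  fix i j
  have "mat_of k (mat_prod {..<k} A B) = mat_of k (id_k k)"
    using prod by (simp add: mat_of_mat_prod mat_of_id_k)
  then have "i < k \<Longrightarrow> j < k \<Longrightarrow> mat_prod {..<k} A B i j = id_k k i j"
    by (rule mat_of_eqD)
  moreover have "mat_prod {..<k} A B i j = 0" if "k \<le> i \<or> k \<le> j"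
    using that A B by (auto simp: mat_prod_def)
  ultimately show "mat_prod {..<k} A B i j = id_k k i j"
    by (cases "i < k \<and> j < k") (auto simp: id_k_def)
qed

lemma mat_prod_inv_k_right:
  assumes "det_k k M \<noteq> 0" and "\<And>i j. k \<le> i \<Longrightarrow> M i j = 0"
  shows "mat_prod {..<k} M (inv_k k M) = id_k k"
proof (rule mat_prod_eq_id_k_if_mat_of)
  show "mat_of k M * mat_of k (inv_k k M) = 1\<^sub>m k"
    using assms(1) adj_mat[OF mat_of_carrier, of k M]
    by (simp add: mat_of_inv_k mult_smult_distrib[OF mat_of_carrier] det_k_eq_det smult_inverse_det_smult)
qed (simp_all add: assms(2) inv_k_vanishes)

lemma mat_prod_inv_k_left:
  assumes "det_k k M \<noteq> 0" and "\<And>i j. k \<le> j \<Longrightarrow> M i j = 0"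
  shows "mat_prod {..<k} (inv_k k M) M = id_k k"
proof (rule mat_prod_eq_id_k_if_mat_of)
  show "mat_of k (inv_k k M) * mat_of k M = 1\<^sub>m k"
    using assms(1) adj_mat[OF mat_of_carrier, of k M]
    by (simp add: mat_of_inv_k mult_smult_assoc_mat[OF _ mat_of_carrier] det_k_eq_det smult_inverse_det_smult)
qed (simp_all add: assms(2) inv_k_vanishes)

lemma det_k_inv_k:
  assumes "det_k k M \<noteq> 0" and "\<And>i j. k \<le> i \<Longrightarrow> M i j = 0"
  shows "det_k k (inv_k k M) = 1 / det_k k M"
proof -
  have "det_k k M * det_k k (inv_k k M) = 1"
    using det_k_mat_prod[of k M "inv_k k M"] mat_prod_inv_k_right[OF assms] by simp
  then show ?thesis
    using assms(1) by (simp add: eq_divide_eq mult.commute)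
qed

lemma mtransp_inv_k:
  assumes d: "det_k k M \<noteq> 0" and M: "\<And>i j. k \<le> i \<or> k \<le> j \<Longrightarrow> M i j = 0"
    and sym: "mtransp M = M"
  shows "mtransp (inv_k k M) = inv_k k M"
proof -
  let ?N = "inv_k k M"
  have R: "mat_prod {..<k} M ?N = id_k k"
    using M by (intro mat_prod_inv_k_right[OF d]) auto
  have "mtransp ?N = mat_prod {..<k} (mtransp ?N) (id_k k)"
    by (rule mat_prod_id_k_right[symmetric]) (simp add: mtransp_def inv_k_vanishes)
  also have "\<dots> = mat_prod {..<k} (mat_prod {..<k} (mtransp ?N) M) ?N"
    by (simp add: R mat_prod_assoc)
  also have "mat_prod {..<k} (mtransp ?N) M = id_k k"
    using R sym by (metis mtransp_id_k mtransp_mat_prod)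
  also have "mat_prod {..<k} (id_k k) ?N = ?N"
    by (rule mat_prod_id_k_left) (simp add: inv_k_vanishes)
  finally show ?thesis .
qed

section \<open>The Cauchy--Binet formula\<close>

lemma bij_betw_sorted_list_nth:
  assumes "finite B" "card B = k"
  shows "bij_betw ((!) (sorted_list_of_set B)) {..<k} B"
  using assms by (auto intro!: bij_betw_nth)

definition enumerations :: "nat \<Rightarrow> 'e set \<Rightarrow> (nat \<Rightarrow> 'e) set" where
  "enumerations k B = {g \<in> {..<k} \<rightarrow>\<^sub>E UNIV. inj_on g {..<k} \<and> g ` {..<k} = B}"

lemma enumerations_iff: "g \<in> enumerations k B \<longleftrightarrow> g \<in> {..<k} \<rightarrow>\<^sub>E UNIV \<and> bij_betw g {..<k} B"
  by (auto simp: enumerations_def bij_betw_def)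

lemma restrict_comp_in_enumerations:
  assumes f: "bij_betw f {..<k} B" and p: "\<tau> permutes {..<k}"
  shows "restrict (\<lambda>i. f (\<tau> i)) {..<k} \<in> enumerations k B"
proof -
  have "bij_betw (f \<circ> \<tau>) {..<k} B"
    using permutes_imp_bij[OF p] f by (rule bij_betw_trans)
  then show ?thesis
    by (simp add: enumerations_iff comp_def)
qed

lemma inv_comp_enumeration_permutes:
  assumes f: "bij_betw f {..<k} B" and g: "g \<in> enumerations k B"
  shows "(\<lambda>i. if i < k then the_inv_into {..<k} f (g i) else i) permutes {..<k}"
proof -
  have "bij_betw g {..<k} B"
    using g by (simp add: enumerations_iff)
  then have "bij_betw (the_inv_into {..<k} f \<circ> g) {..<k} {..<k}"
    using bij_betw_the_inv_into[OF f] by (rule bij_betw_trans)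
  then have "bij_betw (\<lambda>i. if i < k then the_inv_into {..<k} f (g i) else i) {..<k} {..<k}"
    by (rule bij_betw_cong[THEN iffD1, rotated]) simp
  then show ?thesis
    by (rule bij_imp_permutes) simp
qed

lemma restrict_comp_inv_comp_enumeration:
  assumes f: "bij_betw f {..<k} B" and g: "g \<in> enumerations k B"
  shows "restrict (\<lambda>i. f (if i < k then the_inv_into {..<k} f (g i) else i)) {..<k} = g"
proof
  fix i
  show "restrict (\<lambda>i. f (if i < k then the_inv_into {..<k} f (g i) else i)) {..<k} i = g i"
  proof (cases "i < k")
    case True
    then have "g i \<in> B"
      using g by (auto simp: enumerations_def)
    then have "g i \<in> f ` {..<k}"
      using bij_betw_imp_surj_on[OF f] by simp
    then show ?thesis
      using True f_the_inv_into_f[OF bij_betw_imp_inj_on[OF f]] by simp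
  next
    case False
    then show ?thesis
      using g PiE_arb[of g "{..<k}" "\<lambda>_. UNIV" i] by (simp add: enumerations_def)
  qed
qed

lemma bij_betw_permutes_enumerations:
  assumes f: "bij_betw f {..<k} B"
  shows "bij_betw (\<lambda>\<tau>. restrict (\<lambda>i. f (\<tau> i)) {..<k}) {\<tau>. \<tau> permutes {..<k}} (enumerations k B)"
proof -
  define \<sigma> where "\<sigma> g = (\<lambda>i. if i < k then the_inv_into {..<k} f (g i) else i)" for g :: "nat \<Rightarrow> 'a"
  have inj: "inj_on f {..<k}"
    using f by (rule bij_betw_imp_inj_on)
  show ?thesis
  proof (rule bij_betw_byWitness[where f' = \<sigma>])
    show "\<forall>\<tau>\<in>{\<tau>. \<tau> permutes {..<k}}. \<sigma> (restrict (\<lambda>i. f (\<tau> i)) {..<k}) = \<tau>"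
    proof (intro ballI ext)
      fix \<tau> i assume "\<tau> \<in> {\<tau>. \<tau> permutes {..<k}}"
      then have p: "\<tau> permutes {..<k}" by simp
      show "\<sigma> (restrict (\<lambda>i. f (\<tau> i)) {..<k}) i = \<tau> i"
      proof (cases "i < k")
        case True
        then have "\<tau> i \<in> {..<k}"
          using permutes_in_image[OF p] by simp
        then show ?thesis
          using True the_inv_into_f_f[OF inj] by (simp add: \<sigma>_def)
      next
        case False
        then show ?thesis
          using permutes_not_in[OF p, of i] by (simp add: \<sigma>_def)
      qed
    qed
    show "\<forall>g\<in>enumerations k B. restrict (\<lambda>i. f (\<sigma> g i)) {..<k} = g"
      using restrict_comp_inv_comp_enumeration[OF f] by (simp add: \<sigma>_def)
    show "(\<lambda>\<tau>. restrict (\<lambda>i. f (\<tau> i)) {..<k}) ` {\<tau>. \<tau> permutes {..<k}} \<subseteq> enumerations k B"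
      by (rule image_subsetI) (simp add: restrict_comp_in_enumerations[OF f])
    show "\<sigma> ` enumerations k B \<subseteq> {\<tau>. \<tau> permutes {..<k}}"
      by (rule image_subsetI) (simp add: \<sigma>_def inv_comp_enumeration_permutes[OF f])
  qed
qed

lemma cauchy_binet_fiber:
  fixes X Z :: "nat \<Rightarrow> 'e::{finite,linorder} \<Rightarrow> real"
  assumes B: "card B = k"
  shows "(\<Sum>g\<in>enumerations k B. (\<Prod>i<k. X i (g i)) * det_k k (\<lambda>i j. Z j (g i)))
       = det_k k (col_submat X B) * det_k k (col_submat Z B)"
proof -
  define s where "s = sorted_list_of_set B"
  define F where "F g = (\<Prod>i<k. X i (g i)) * det_k k (\<lambda>i j. Z j (g i))" for g
  have s: "bij_betw ((!) s) {..<k} B"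
    unfolding s_def by (rule bij_betw_sorted_list_nth[OF finite B])
  have summand: "F (restrict (\<lambda>i. s ! \<tau> i) {..<k})
      = of_int (sign \<tau>) * (\<Prod>i<k. col_submat X B i (\<tau> i)) * det_k k (col_submat Z B)"
    if p: "\<tau> permutes {..<k}" for \<tau>
  proof -
    have "det_k k (\<lambda>i j. Z j (restrict (\<lambda>i. s ! \<tau> i) {..<k} i)) = det_k k (\<lambda>i j. Z j (s ! \<tau> i))"
      by (rule det_k_cong) simp
    also have "\<dots> = of_int (sign \<tau>) * det_k k (\<lambda>i j. Z j (s ! i))"
      by (rule det_k_permute_rows[OF p])
    also have "det_k k (\<lambda>i j. Z j (s ! i)) = det_k k (col_submat Z B)"
      using det_k_transpose[of k "col_submat Z B"] by (simp add: col_submat_def s_def)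
    finally show ?thesis
      by (simp add: F_def col_submat_def s_def)
  qed
  have "(\<Sum>g\<in>enumerations k B. F g) = (\<Sum>\<tau> | \<tau> permutes {..<k}. F (restrict (\<lambda>i. s ! \<tau> i) {..<k}))"
    using bij_betw_permutes_enumerations[OF s] by (rule sum.reindex_bij_betw[symmetric])
  also have "\<dots> = (\<Sum>\<tau> | \<tau> permutes {..<k}.
      of_int (sign \<tau>) * (\<Prod>i<k. col_submat X B i (\<tau> i)) * det_k k (col_submat Z B))"
    by (intro sum.cong) (simp_all add: summand)
  also have "\<dots> = det_k k (col_submat X B) * det_k k (col_submat Z B)"
    by (simp add: det_k_def sum_distrib_right)
  finally show ?thesis
    by (simp add: F_def)
qed

theorem cauchy_binet:
  fixes X Z :: "nat \<Rightarrow> 'e::{finite,linorder} \<Rightarrow> real"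
  shows "det_k k (\<lambda>i j. \<Sum>f\<in>UNIV. X i f * Z j f)
       = (\<Sum>B | card B = k. det_k k (col_submat X B) * det_k k (col_submat Z B))"
proof -
  define G where "G = {..<k} \<rightarrow>\<^sub>E (UNIV :: 'e set)"
  define GI where "GI = {g \<in> G. inj_on g {..<k}}"
  define F where "F g = (\<Prod>i<k. X i (g i)) * det_k k (\<lambda>i j. Z j (g i))" for g
  have "finite G"
    by (simp add: G_def finite_PiE)
  have "det_k k (\<lambda>i j. \<Sum>f\<in>UNIV. X i f * Z j f)
      = (\<Sum>p | p permutes {..<k}. \<Sum>g\<in>G. of_int (sign p) * ((\<Prod>i<k. X i (g i)) * (\<Prod>i<k. Z (p i) (g i))))"
    unfolding det_k_def G_def by (simp add: prod_sum_PiE prod.distrib sum_distrib_left)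
  also have "\<dots> = (\<Sum>g\<in>G. F g)"
    unfolding F_def det_k_def by (subst sum.swap) (simp add: sum_distrib_left mult_ac)
  also have "\<dots> = (\<Sum>g\<in>GI. F g)"
  proof (rule sum.mono_neutral_right)
    show "\<forall>g\<in>G - GI. F g = 0"
    proof
      fix g assume "g \<in> G - GI"
      then obtain i1 i2 where "i1 < k" "i2 < k" "i1 \<noteq> i2" "g i1 = g i2"
        by (auto simp: GI_def inj_on_def)
      then have "det_k k (\<lambda>i j. Z j (g i)) = 0"
        by (intro det_k_identical_rows[of i1 k i2]) auto
      then show "F g = 0" by (simp add: F_def)
    qed
  qed (auto simp: GI_def \<open>finite G\<close>)
  also have "\<dots> = (\<Sum>B | card B = k. \<Sum>g\<in>{g \<in> GI. g ` {..<k} = B}. F g)"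
    using \<open>finite G\<close> by (intro sum.group[symmetric]) (auto simp: GI_def card_image)
  also have "\<dots> = (\<Sum>B | card B = k. det_k k (col_submat X B) * det_k k (col_submat Z B))"
  proof (intro sum.cong refl)
    fix B :: "'e set" assume "B \<in> {B. card B = k}"
    moreover have "{g \<in> GI. g ` {..<k} = B} = enumerations k B"
      by (auto simp: GI_def G_def enumerations_def)
    ultimately show "(\<Sum>g\<in>{g \<in> GI. g ` {..<k} = B}. F g)
        = det_k k (col_submat X B) * det_k k (col_submat Z B)"
      using cauchy_binet_fiber[of B k X Z] by (simp add: F_def)
  qed
  finally show ?thesis .
qed

section \<open>Orthogonal projection onto a row space\<close>

lemma det_col_submat_scale:
  fixes X :: "nat \<Rightarrow> 'e::{finite,linorder} \<Rightarrow> real"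
  assumes "card B = k"
  shows "det_k k (col_submat (\<lambda>i f. X i f * w f) B) = (\<Prod>f\<in>B. w f) * det_k k (col_submat X B)"
proof -
  define s where "s = sorted_list_of_set B"
  have "det_k k (col_submat (\<lambda>i f. X i f * w f) B) = (\<Prod>j<k. w (s ! j)) * det_k k (col_submat X B)"
    using det_k_scale_cols[of k "col_submat X B" "\<lambda>j. w (s ! j)"] by (simp add: col_submat_def s_def)
  also have "(\<Prod>j<k. w (s ! j)) = (\<Prod>f\<in>B. w f)"
    using prod.reindex_bij_betw[OF bij_betw_sorted_list_nth[OF _ assms], of w] by (simp add: s_def)
  finally show ?thesis .
qed

lemma det_rank_one_update_singular:
  assumes "l < k" "a l \<noteq> 0" and "1 + c * (\<Sum>j<k. b j * a j) = 0"
  shows "det_k k (\<lambda>i j. id_k k i j + c * a i * b j) = 0"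
proof (rule det_k_eq_0_if_kernel[where v = a and l = l])
  fix i assume "i < k"
  have "(\<Sum>j<k. id_k k i j * a j) = a i"
    using \<open>i < k\<close> by (simp add: id_k_def if_distrib[of "\<lambda>y. y * _"] cong: if_cong)
  moreover have "(\<Sum>j<k. c * a i * b j * a j) = c * a i * (\<Sum>j<k. b j * a j)"
    by (simp add: sum_distrib_left mult_ac)
  ultimately have "(\<Sum>j<k. (id_k k i j + c * a i * b j) * a j) = a i + c * a i * (\<Sum>j<k. b j * a j)"
    by (simp add: distrib_right sum.distrib)
  also have "\<dots> = a i * (1 + c * (\<Sum>j<k. b j * a j))"
    by (simp add: algebra_simps)
  finally show "(\<Sum>j<k. (id_k k i j + c * a i * b j) * a j) = 0"
    using assms(3) by simp
qed (use assms in auto)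

lemma det_rank_one_update_inverse:
  assumes "(\<Sum>l<k. a l * b l) = 0"
  shows "det_k k (\<lambda>i j. id_k k i j + a i * b j) * det_k k (\<lambda>i j. id_k k i j - a i * b j) = 1"
proof -
  have "det_k k (mat_prod {..<k} (\<lambda>i j. id_k k i j + a i * b j) (\<lambda>i j. id_k k i j - a i * b j))
      = det_k k (id_k k)"
  proof (rule det_k_cong)
    fix i j assume ij: "i < k" "j < k"
    have "mat_prod {..<k} (\<lambda>i j. id_k k i j + a i * b j) (\<lambda>i j. id_k k i j - a i * b j) i j
        = (\<Sum>l<k. (id_k k l j + (- 1) * a l * b j) * (id_k k i l + a i * b l))"
      by (simp add: mat_prod_def mult.commute)
    also have "\<dots> = id_k k i j - a i * b j + a i * (b j - b j * (\<Sum>l<k. a l * b l))"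
      using ij
      by (simp add: distrib_right sum.distrib sum_distrib_left sum_subtractf id_k_def
          algebra_simps if_distrib[of "\<lambda>y. y * _"] if_distrib[of "\<lambda>y. _ * y"] cong: if_cong)
    finally show "mat_prod {..<k} (\<lambda>i j. id_k k i j + a i * b j) (\<lambda>i j. id_k k i j - a i * b j) i j
        = id_k k i j"
      using assms by simp
  qed
  then show ?thesis
    by (simp add: det_k_mat_prod)
qed

text \<open>Affinity in \<open>c\<close> is what Cauchy--Binet supplies (\<open>det_id_plus_scaled_column\<close>).\<close>

lemma det_rank_one_update_slope:
  assumes affine: "\<And>c. det_k k (\<lambda>i j. id_k k i j + c * a i * b j) = 1 + c * \<beta>"
  shows "\<beta> = (\<Sum>i<k. a i * b i)"
proof (cases "(\<Sum>i<k. a i * b i) = 0")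
  case True
  have "(1 + \<beta>) * (1 - \<beta>) = 1"
    using det_rank_one_update_inverse[OF True] affine[of 1] affine[of "- 1"] by simp
  then show ?thesis
    using True by (simp add: algebra_simps)
next
  case False
  define \<gamma> where "\<gamma> = (\<Sum>i<k. a i * b i)"
  obtain l where "l < k" "a l \<noteq> 0"
    using False by (metis (no_types, lifting) lessThan_iff mult_eq_0_iff sum.neutral)
  moreover have "1 + (- 1 / \<gamma>) * (\<Sum>j<k. b j * a j) = 0"
    using False by (simp add: \<gamma>_def mult.commute)
  ultimately have "det_k k (\<lambda>i j. id_k k i j + (- 1 / \<gamma>) * a i * b j) = 0"
    by (rule det_rank_one_update_singular)
  then show ?thesis
    using affine[of "- 1 / \<gamma>"] False by (simp add: \<gamma>_def field_simps)
qed

text \<open>Cauchy--Binet applied to \<open>X\<close> with column \<open>e\<close> scaled by \<open>s\<close>.\<close>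

lemma det_id_plus_scaled_column:
  fixes X Z :: "nat \<Rightarrow> 'e::{finite,linorder} \<Rightarrow> real"
  assumes biorth: "\<And>i j. i < k \<Longrightarrow> j < k \<Longrightarrow> (\<Sum>f\<in>UNIV. X i f * Z j f) = id_k k i j"
  shows "det_k k (\<lambda>i j. id_k k i j + (s - 1) * X i e * Z j e)
       = (\<Sum>B | card B = k \<and> e \<notin> B. det_k k (col_submat X B) * det_k k (col_submat Z B))
         + s * (\<Sum>B | card B = k \<and> e \<in> B. det_k k (col_submat X B) * det_k k (col_submat Z B))"
proof -
  define d where "d B = det_k k (col_submat X B) * det_k k (col_submat Z B)" for B
  define w where "w f = (if f = e then s else 1)" for f
  have "det_k k (\<lambda>i j. id_k k i j + (s - 1) * X i e * Z j e)
      = det_k k (\<lambda>i j. \<Sum>f\<in>UNIV. X i f * w f * Z j f)"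
  proof (rule det_k_cong)
    fix i j assume "i < k" "j < k"
    have "(\<Sum>f\<in>UNIV. X i f * w f * Z j f)
        = (\<Sum>f\<in>UNIV. X i f * Z j f + (if f = e then (s - 1) * X i e * Z j e else 0))"
      by (intro sum.cong) (auto simp: w_def algebra_simps)
    then show "id_k k i j + (s - 1) * X i e * Z j e = (\<Sum>f\<in>UNIV. X i f * w f * Z j f)"
      using biorth[OF \<open>i < k\<close> \<open>j < k\<close>] by (simp add: sum.distrib)
  qed
  also have "\<dots> = (\<Sum>B | card B = k. (\<Prod>f\<in>B. w f) * d B)"
    using cauchy_binet[of k "\<lambda>i f. X i f * w f" Z]
    by (simp add: det_col_submat_scale d_def mult.assoc)
  also have "\<dots> = (\<Sum>B | card B = k. if e \<in> B then s * d B else d B)"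
    by (intro sum.cong) (auto simp: w_def prod.delta)
  also have "\<dots> = (\<Sum>B | card B = k \<and> e \<notin> B. d B) + s * (\<Sum>B | card B = k \<and> e \<in> B. d B)"
  proof -
    have "{B. card B = k} \<inter> {B. e \<in> B} = {B. card B = k \<and> e \<in> B}"
      "{B. card B = k} \<inter> - {B. e \<in> B} = {B. card B = k \<and> e \<notin> B}"
      by auto
    then show ?thesis
      by (simp add: sum.If_cases sum_distrib_left)
  qed
  finally show ?thesis
    by (simp add: d_def)
qed

lemma sum_minors_containing:
  fixes X Z :: "nat \<Rightarrow> 'e::{finite,linorder} \<Rightarrow> real"
  assumes biorth: "\<And>i j. i < k \<Longrightarrow> j < k \<Longrightarrow> (\<Sum>f\<in>UNIV. X i f * Z j f) = id_k k i j"
  shows "(\<Sum>B | card B = k \<and> e \<in> B. det_k k (col_submat X B) * det_k k (col_submat Z B))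
         = (\<Sum>i<k. X i e * Z i e)"
proof -
  define \<alpha> where "\<alpha> = (\<Sum>B | card B = k \<and> e \<notin> B. det_k k (col_submat X B) * det_k k (col_submat Z B))"
  define \<beta> where "\<beta> = (\<Sum>B | card B = k \<and> e \<in> B. det_k k (col_submat X B) * det_k k (col_submat Z B))"
  have "\<beta> = (\<Sum>i<k. X i e * Z i e)"
  proof (rule det_rank_one_update_slope)
    fix c
    have "\<alpha> + \<beta> = 1"
      using det_id_plus_scaled_column[OF biorth, of 1 e, folded \<alpha>_def \<beta>_def]
      by (simp add: id_k_def[symmetric])
    then show "det_k k (\<lambda>i j. id_k k i j + c * X i e * Z j e) = 1 + c * \<beta>"
      using det_id_plus_scaled_column[OF biorth, of "c + 1" e, folded \<alpha>_def \<beta>_def]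
      by (simp add: algebra_simps)
  qed
  then show ?thesis
    by (simp add: \<beta>_def)
qed

definition gram :: "(nat \<Rightarrow> 'e::finite \<Rightarrow> real) \<Rightarrow> nat \<Rightarrow> nat \<Rightarrow> real" where
  "gram X = mat_prod UNIV X (mtransp X)"

definition row_space_proj :: "nat \<Rightarrow> (nat \<Rightarrow> 'e::finite \<Rightarrow> real) \<Rightarrow> 'e \<Rightarrow> 'e \<Rightarrow> real" where
  "row_space_proj k X = mat_prod {..<k} (mat_prod {..<k} (mtransp X) (inv_k k (gram X))) X"

lemma mtransp_gram: "mtransp (gram X) = gram X"
  by (simp add: gram_def mtransp_mat_prod)

lemma det_gram: "det_k k (gram X) = (\<Sum>B | card B = k. det_k k (col_submat X B) ^ 2)"
  using cauchy_binet[of k X X] by (simp add: gram_def mat_prod_def mtransp_def power2_eq_square)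

lemma trace_mat_prod_commute:
  assumes "finite S" "finite T"
  shows "(\<Sum>e\<in>S. mat_prod T A B e e) = (\<Sum>i\<in>T. mat_prod S B A i i)"
  unfolding mat_prod_def by (subst sum.swap) (simp add: mult.commute)

locale independent_rows =
  fixes k :: nat and X :: "nat \<Rightarrow> 'e::{finite,linorder} \<Rightarrow> real"
  assumes rows_vanish: "\<And>i f. k \<le> i \<Longrightarrow> X i f = 0"
    and det_gram_nonzero: "det_k k (gram X) \<noteq> 0"
begin

lemma gram_vanishes: "k \<le> i \<or> k \<le> j \<Longrightarrow> gram X i j = 0"
  by (auto simp: gram_def mat_prod_def mtransp_def rows_vanish)

lemma gram_inv_right: "mat_prod {..<k} (gram X) (inv_k k (gram X)) = id_k k"
  using gram_vanishes by (intro mat_prod_inv_k_right det_gram_nonzero) auto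

lemma inv_gram_left: "mat_prod {..<k} (inv_k k (gram X)) (gram X) = id_k k"
  using gram_vanishes by (intro mat_prod_inv_k_left det_gram_nonzero) auto

lemma mtransp_inv_gram: "mtransp (inv_k k (gram X)) = inv_k k (gram X)"
  using gram_vanishes by (intro mtransp_inv_k det_gram_nonzero mtransp_gram)

lemma det_gram_pos: "det_k k (gram X) > 0"
proof -
  have "0 \<le> det_k k (gram X)"
    unfolding det_gram by (intro sum_nonneg) simp
  then show ?thesis
    using det_gram_nonzero by simp
qed

lemma mtransp_row_space_proj: "mtransp (row_space_proj k X) = row_space_proj k X"
  by (simp add: row_space_proj_def mtransp_mat_prod mtransp_inv_gram mat_prod_assoc)

lemma rows_mat_prod_row_space_proj: "mat_prod UNIV X (row_space_proj k X) = X"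
proof -
  have "mat_prod UNIV X (row_space_proj k X)
      = mat_prod {..<k} (mat_prod {..<k} (gram X) (inv_k k (gram X))) X"
    by (simp add: row_space_proj_def gram_def mat_prod_assoc)
  also have "\<dots> = X"
    by (simp add: gram_inv_right mat_prod_id_k_left rows_vanish)
  finally show ?thesis .
qed

lemma row_space_proj_idempotent:
  "mat_prod UNIV (row_space_proj k X) (row_space_proj k X) = row_space_proj k X"
proof -
  have "mat_prod UNIV (row_space_proj k X) (row_space_proj k X)
      = mat_prod {..<k} (mat_prod {..<k} (mtransp X) (inv_k k (gram X))) (mat_prod UNIV X (row_space_proj k X))"
    by (subst (1) row_space_proj_def) (simp add: mat_prod_assoc)
  then show ?thesis
    unfolding rows_mat_prod_row_space_proj by (simp add: row_space_proj_def)
qed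

lemma det_principal_submat_row_space_proj:
  assumes "card B = k"
  shows "det_k k (principal_submat (row_space_proj k X) B)
       = det_k k (col_submat X B) ^ 2 / det_k k (gram X)"
proof -
  let ?XB = "col_submat X B"
  have "principal_submat (row_space_proj k X) B
      = mat_prod {..<k} (mat_prod {..<k} (mtransp ?XB) (inv_k k (gram X))) ?XB"
    by (simp add: row_space_proj_def principal_submat_def col_submat_def mat_prod_def mtransp_def)
  then show ?thesis
    using det_k_transpose[of k ?XB] gram_vanishes det_gram_nonzero
    by (simp add: det_k_mat_prod det_k_inv_k mtransp_def power2_eq_square)
qed

lemma row_space_proj_diag:
  "row_space_proj k X e e
     = (\<Sum>B | card B = k \<and> e \<in> B. det_k k (col_submat X B) ^ 2) / det_k k (gram X)"
proof -
  define Z where "Z = mat_prod {..<k} (inv_k k (gram X)) X"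
  have "mtransp Z = mat_prod {..<k} (mtransp X) (inv_k k (gram X))"
    by (simp add: Z_def mtransp_mat_prod mtransp_inv_gram)
  then have "mat_prod UNIV X (mtransp Z) = mat_prod {..<k} (gram X) (inv_k k (gram X))"
    by (simp add: gram_def mat_prod_assoc)
  then have XZ: "mat_prod UNIV X (mtransp Z) = id_k k"
    by (simp add: gram_inv_right)
  have biorth: "(\<Sum>f\<in>UNIV. X i f * Z j f) = id_k k i j" for i j
    using fun_cong[OF fun_cong[OF XZ, of i], of j] by (simp add: mat_prod_def mtransp_def)
  have "col_submat Z B = mat_prod {..<k} (inv_k k (gram X)) (col_submat X B)" for B
    by (simp add: Z_def col_submat_def mat_prod_def)
  then have minors_Z: "det_k k (col_submat Z B) = det_k k (col_submat X B) / det_k k (gram X)" for B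
    using gram_vanishes det_gram_nonzero by (simp add: det_k_mat_prod det_k_inv_k)
  have "row_space_proj k X e e = (\<Sum>i<k. X i e * Z i e)"
    by (simp add: row_space_proj_def Z_def mat_prod_assoc) (simp add: mat_prod_def mtransp_def)
  also have "\<dots> = (\<Sum>B | card B = k \<and> e \<in> B. det_k k (col_submat X B) * det_k k (col_submat Z B))"
    by (rule sum_minors_containing[symmetric]) (rule biorth)
  finally show ?thesis
    by (simp add: minors_Z sum_divide_distrib power2_eq_square)
qed

lemma trace_row_space_proj: "(\<Sum>e\<in>UNIV. row_space_proj k X e e) = real k"
proof -
  have "(\<Sum>e\<in>UNIV. row_space_proj k X e e)
      = (\<Sum>e\<in>UNIV. mat_prod {..<k} (mtransp X) (mat_prod {..<k} (inv_k k (gram X)) X) e e)"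
    by (simp add: row_space_proj_def mat_prod_assoc)
  also have "\<dots> = (\<Sum>i<k. mat_prod UNIV (mat_prod {..<k} (inv_k k (gram X)) X) (mtransp X) i i)"
    by (rule trace_mat_prod_commute) simp_all
  also have "\<dots> = (\<Sum>i<k. id_k k i i)"
    by (simp add: mat_prod_assoc gram_def[symmetric] inv_gram_left)
  finally show ?thesis by (simp add: id_k_def)
qed

end

lemma independent_rows_if_minor_nonzero:
  fixes X :: "nat \<Rightarrow> 'e::{finite,linorder} \<Rightarrow> real"
  assumes "\<And>i f. k \<le> i \<Longrightarrow> X i f = 0" and "card B = k" "det_k k (col_submat X B) \<noteq> 0"
  shows "independent_rows k X"
proof
  have "0 < det_k k (col_submat X B) ^ 2"
    using assms(3) by simp
  also have "\<dots> \<le> det_k k (gram X)"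
    unfolding det_gram using assms(2) by (intro member_le_sum) auto
  finally show "det_k k (gram X) \<noteq> 0" by simp
qed (fact assms(1))

section \<open>The relative interior of the base polytope\<close>

lemma rel_interior_convex_hull_finite:
  fixes S :: "'a::euclidean_space set"
  assumes "finite S"
  shows "rel_interior (convex hull S)
       = {y. \<exists>u. (\<forall>x\<in>S. 0 < u x) \<and> sum u S = 1 \<and> (\<Sum>x\<in>S. u x *\<^sub>R x) = y}"
  using rel_interior_convex_hull_union[where S = "\<lambda>x. {x}" and I = S, OF assms] by force

lemma inj_indicator_vec: "inj indicator_vec"
proof (rule injI)
  fix B C :: "'e::finite set"
  assume eq: "indicator_vec B = indicator_vec C"
  have "e \<in> B \<longleftrightarrow> e \<in> C" for e
  proof -
    have "vec_nth (indicator_vec B) e = vec_nth (indicator_vec C) e"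
      using eq by simp
    then show ?thesis
      by (simp add: indicator_vec_def split: if_splits)
  qed
  then show "B = C"
    by blast
qed

lemma rel_interior_base_polytope_iff:
  fixes bases :: "'e::finite set set"
  shows "y \<in> rel_interior (base_polytope bases) \<longleftrightarrow>
    (\<exists>\<mu>. (\<forall>B\<in>bases. \<mu> B > 0) \<and> sum \<mu> bases = 1 \<and> (\<Sum>B\<in>bases. \<mu> B *\<^sub>R indicator_vec B) = y)"
proof -
  have inj: "inj_on indicator_vec bases"
    using inj_indicator_vec by (rule inj_on_subset) simp
  have reindex: "sum u (indicator_vec ` bases) = sum (u \<circ> indicator_vec) bases"
    "(\<Sum>x\<in>indicator_vec ` bases. u x *\<^sub>R x) = (\<Sum>B\<in>bases. u (indicator_vec B) *\<^sub>R indicator_vec B)"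
    for u :: "real ^ 'e \<Rightarrow> real"
    using sum.reindex[OF inj] by (simp_all add: comp_def)
  show ?thesis
  proof
    assume "y \<in> rel_interior (base_polytope bases)"
    then obtain u where "\<forall>x\<in>indicator_vec ` bases. 0 < u x" "sum u (indicator_vec ` bases) = 1"
      "(\<Sum>x\<in>indicator_vec ` bases. u x *\<^sub>R x) = y"
      unfolding base_polytope_def rel_interior_convex_hull_finite[OF finite_imageI[OF finite]] by blast
    then show "\<exists>\<mu>. (\<forall>B\<in>bases. \<mu> B > 0) \<and> sum \<mu> bases = 1 \<and> (\<Sum>B\<in>bases. \<mu> B *\<^sub>R indicator_vec B) = y"
      by (intro exI[of _ "u \<circ> indicator_vec"]) (simp add: reindex)
  next
    assume "\<exists>\<mu>. (\<forall>B\<in>bases. \<mu> B > 0) \<and> sum \<mu> bases = 1 \<and> (\<Sum>B\<in>bases. \<mu> B *\<^sub>R indicator_vec B) = y"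
    then obtain \<mu> where \<mu>: "\<forall>B\<in>bases. \<mu> B > 0" "sum \<mu> bases = 1"
      "(\<Sum>B\<in>bases. \<mu> B *\<^sub>R indicator_vec B) = y"
      by blast
    define u where "u x = \<mu> (the_inv_into bases indicator_vec x)" for x
    have "u (indicator_vec B) = \<mu> B" if "B \<in> bases" for B
      using the_inv_into_f_f[OF inj that] by (simp add: u_def)
    then have "(\<forall>x\<in>indicator_vec ` bases. 0 < u x) \<and> sum u (indicator_vec ` bases) = 1
        \<and> (\<Sum>x\<in>indicator_vec ` bases. u x *\<^sub>R x) = y"
      using \<mu> by (simp add: reindex comp_def)
    then show "y \<in> rel_interior (base_polytope bases)"
      unfolding base_polytope_def rel_interior_convex_hull_finite[OF finite_imageI[OF finite]] by blast
  qed
qed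

lemma sum_scaleR_indicator_vec_nth:
  "vec_nth (\<Sum>B\<in>S. \<mu> B *\<^sub>R indicator_vec B) e = (\<Sum>B\<in>{B\<in>S. e \<in> B}. \<mu> B)"
  by (simp add: indicator_vec_def sum.inter_filter if_distrib[of "\<lambda>x. _ * x"] cong: if_cong)

lemma const_in_rel_interior_base_polytope_iff:
  fixes bases :: "'e::finite set set"
  shows "(\<chi> e. c) \<in> rel_interior (base_polytope bases) \<longleftrightarrow>
    (\<exists>\<mu>. (\<forall>B\<in>bases. \<mu> B > 0) \<and> sum \<mu> bases = 1 \<and> (\<forall>e. (\<Sum>B\<in>{B\<in>bases. e \<in> B}. \<mu> B) = c))"
  unfolding rel_interior_base_polytope_iff Finite_Cartesian_Product.vec_eq_iff
    sum_scaleR_indicator_vec_nth vec_lambda_beta ..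

section \<open>Minimising a sum of exponentials\<close>

lemma balanced_vectors_orthogonal:
  fixes v :: "'b \<Rightarrow> 'a::real_inner"
  assumes "finite I" and \<mu>: "\<And>i. i \<in> I \<Longrightarrow> \<mu> i > 0" and bal: "(\<Sum>i\<in>I. \<mu> i *\<^sub>R v i) = 0"
    and nonpos: "\<And>i. i \<in> I \<Longrightarrow> inner (v i) y \<le> 0" and "i \<in> I"
  shows "inner (v i) y = 0"
proof -
  have "(\<Sum>i\<in>I. - (\<mu> i * inner (v i) y)) = - inner (\<Sum>i\<in>I. \<mu> i *\<^sub>R v i) y"
    by (simp add: inner_sum_left sum_negf)
  then have "(\<Sum>i\<in>I. - (\<mu> i * inner (v i) y)) = 0"
    using bal by simp
  moreover have "\<And>i. i \<in> I \<Longrightarrow> 0 \<le> - (\<mu> i * inner (v i) y)"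
    using \<mu> nonpos by (simp add: mult_nonneg_nonpos less_imp_le)
  ultimately have "\<forall>j\<in>I. - (\<mu> j * inner (v j) y) = 0"
    using sum_nonneg_eq_0_iff[OF \<open>finite I\<close>, of "\<lambda>j. - (\<mu> j * inner (v j) y)"] by simp
  then have "\<mu> i * inner (v i) y = 0"
    using \<open>i \<in> I\<close> by simp
  then show ?thesis
    using \<mu>[OF \<open>i \<in> I\<close>] by simp
qed

lemma balanced_vectors_positive:
  fixes v :: "'b \<Rightarrow> 'a::real_inner"
  assumes "finite I" and \<mu>: "\<And>i. i \<in> I \<Longrightarrow> \<mu> i > 0" and bal: "(\<Sum>i\<in>I. \<mu> i *\<^sub>R v i) = 0"
    and y: "y \<in> span (v ` I)" "y \<noteq> 0"
  shows "\<exists>i\<in>I. inner (v i) y > 0"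
proof (rule ccontr)
  assume "\<not> ?thesis"
  then have nonpos: "\<And>i. i \<in> I \<Longrightarrow> inner (v i) y \<le> 0"
    by (simp add: not_less)
  have "inner (v i) y = 0" if "i \<in> I" for i
    by (rule balanced_vectors_orthogonal[OF \<open>finite I\<close> \<mu> bal nonpos that])
  then have "real_inner_class.orthogonal y y"
    using y(1) by (intro orthogonal_to_span[of y "v ` I" y])
      (auto simp: real_inner_class.orthogonal_def inner_commute)
  then show False
    using y(2) by (simp add: real_inner_class.orthogonal_def)
qed

lemma compact_continuous_pos_bounded_below:
  fixes g :: "'a::topological_space \<Rightarrow> real"
  assumes "compact K" "continuous_on K g" "\<And>y. y \<in> K \<Longrightarrow> g y > 0"
  obtains \<delta> where "\<delta> > 0" "\<And>y. y \<in> K \<Longrightarrow> \<delta> \<le> g y"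
proof (cases "K = {}")
  case False
  then obtain y0 where "y0 \<in> K" "\<And>y. y \<in> K \<Longrightarrow> g y0 \<le> g y"
    using continuous_attains_inf[OF assms(1) False assms(2)] by blast
  then show ?thesis
    using that[of "g y0"] assms(3) by blast
qed (use that[of 1] in simp)

lemma balanced_vectors_growth:
  fixes v :: "'b \<Rightarrow> 'a::euclidean_space"
  assumes I: "finite I" "I \<noteq> {}" and \<mu>: "\<And>i. i \<in> I \<Longrightarrow> \<mu> i > 0"
    and bal: "(\<Sum>i\<in>I. \<mu> i *\<^sub>R v i) = 0"
  obtains \<delta> where "\<delta> > 0" "\<And>y. y \<in> span (v ` I) \<Longrightarrow> \<exists>i\<in>I. \<delta> * norm y \<le> inner (v i) y"
proof -
  define g where "g y = (\<Sum>i\<in>I. max 0 (inner (v i) y))" for y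
  define K where "K = span (v ` I) \<inter> sphere 0 1"
  have g_pos: "g y > 0" if "y \<in> K" for y
  proof -
    have "y \<in> span (v ` I)" "y \<noteq> 0"
      using that by (auto simp: K_def)
    then obtain i where "i \<in> I" "inner (v i) y > 0"
      using balanced_vectors_positive[OF I(1) \<mu> bal] by blast
    then have "0 < max 0 (inner (v i) y)"
      by simp
    also have "\<dots> \<le> g y"
      unfolding g_def using I(1) \<open>i \<in> I\<close> by (intro member_le_sum) auto
    finally show ?thesis .
  qed
  have "compact K"
    unfolding K_def by (rule closed_Int_compact[OF closed_span compact_sphere])
  moreover have "continuous_on K g"
    unfolding g_def by (intro continuous_intros)
  ultimately obtain \<delta>0 where \<delta>0: "\<delta>0 > 0" "\<And>y. y \<in> K \<Longrightarrow> \<delta>0 \<le> g y"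
    using compact_continuous_pos_bounded_below g_pos by blast
  define \<delta> where "\<delta> = \<delta>0 / real (card I)"
  have card_pos: "real (card I) > 0"
    using I by (simp add: card_gt_0_iff)
  have "\<exists>i\<in>I. \<delta> * norm y \<le> inner (v i) y" if y: "y \<in> span (v ` I)" for y
  proof (cases "y = 0")
    case False
    define y' where "y' = y /\<^sub>R norm y"
    have "y' \<in> K"
      using y False by (simp add: K_def y'_def span_mul)
    have "\<exists>i\<in>I. \<delta> \<le> max 0 (inner (v i) y')"
    proof (rule ccontr)
      assume "\<not> ?thesis"
      then have "g y' < (\<Sum>i\<in>I. \<delta>)"
        unfolding g_def using I by (intro sum_strict_mono) auto
      then show False
        using \<delta>0(2)[OF \<open>y' \<in> K\<close>] card_pos by (simp add: \<delta>_def)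
    qed
    moreover have "\<delta> > 0"
      using \<delta>0(1) card_pos by (simp add: \<delta>_def)
    ultimately obtain i where i: "i \<in> I" "\<delta> \<le> inner (v i) y'"
      by (auto simp: le_max_iff_disj)
    have "norm y * \<delta> \<le> norm y * inner (v i) y'"
      using i(2) by (simp add: mult_left_mono)
    also have "\<dots> = inner (v i) y"
      using False by (simp add: y'_def)
    finally show ?thesis
      using i(1) by (auto simp: mult.commute)
  qed (use I in auto)
  then show ?thesis
    using that[of \<delta>] \<delta>0(1) card_pos by (simp add: \<delta>_def)
qed

lemma exp_sum_coercive:
  fixes v :: "'b \<Rightarrow> 'a::euclidean_space"
  assumes I: "finite I" "I \<noteq> {}" and w: "\<And>i. i \<in> I \<Longrightarrow> w i > 0"
    and \<mu>: "\<And>i. i \<in> I \<Longrightarrow> \<mu> i > 0" and bal: "(\<Sum>i\<in>I. \<mu> i *\<^sub>R v i) = 0"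
  shows "\<exists>R\<ge>0. \<forall>y\<in>span (v ` I). R < norm y \<longrightarrow> sum w I < (\<Sum>i\<in>I. w i * exp (inner (v i) y))"
proof -
  obtain \<delta> where \<delta>: "\<delta> > 0" "\<And>y. y \<in> span (v ` I) \<Longrightarrow> \<exists>i\<in>I. \<delta> * norm y \<le> inner (v i) y"
    using balanced_vectors_growth[OF I \<mu> bal] by blast
  define wmin where "wmin = Min (w ` I)"
  have wmin: "wmin > 0" "\<And>i. i \<in> I \<Longrightarrow> wmin \<le> w i"
    using I w by (auto simp: wmin_def)
  define R where "R = sum w I / (wmin * \<delta>)"
  have "sum w I > 0"
    using I w by (intro sum_pos) auto
  then have "R \<ge> 0"
    using wmin(1) \<delta>(1) by (simp add: R_def)
  moreover have "sum w I < (\<Sum>i\<in>I. w i * exp (inner (v i) y))"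
    if y: "y \<in> span (v ` I)" "R < norm y" for y
  proof -
    obtain i where i: "i \<in> I" "\<delta> * norm y \<le> inner (v i) y"
      using \<delta>(2)[OF y(1)] by blast
    have "sum w I = wmin * (\<delta> * R)"
      using wmin(1) \<delta>(1) by (simp add: R_def)
    also have "\<dots> < wmin * exp (\<delta> * norm y)"
      using y(2) wmin(1) \<delta>(1) exp_gt_self[of "\<delta> * norm y"]
      by (intro mult_strict_left_mono) (auto intro: less_trans[rotated])
    also have "\<dots> \<le> w i * exp (inner (v i) y)"
      using i wmin w[OF i(1)] by (intro mult_mono) auto
    also have "\<dots> \<le> (\<Sum>i\<in>I. w i * exp (inner (v i) y))"
      using i(1) I(1) w by (intro member_le_sum) (auto intro: less_imp_le)
    finally show ?thesis .
  qed
  ultimately show ?thesis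
    by blast
qed

lemma exp_sum_add_orthogonal:
  fixes v :: "'b \<Rightarrow> 'a::real_inner"
  assumes "\<And>x. x \<in> span (v ` I) \<Longrightarrow> real_inner_class.orthogonal z x"
  shows "(\<Sum>i\<in>I. w i * exp (inner (v i) (y + z))) = (\<Sum>i\<in>I. w i * exp (inner (v i) y))"
proof -
  have "inner (v i) z = 0" if "i \<in> I" for i
  proof -
    have "real_inner_class.orthogonal z (v i)"
      using assms span_base[of "v i" "v ` I"] that by blast
    then show ?thesis
      by (simp add: real_inner_class.orthogonal_def inner_commute)
  qed
  then show ?thesis
    by (intro sum.cong) (auto simp: inner_add_right)
qed

text \<open>The sum is constant along the orthogonal complement of \<open>span (v ` I)\<close>, so a minimiser
  on a large ball suffices.\<close>

lemma exp_sum_attains_min: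
  fixes v :: "'b \<Rightarrow> 'a::euclidean_space"
  assumes I: "finite I" "I \<noteq> {}" and w: "\<And>i. i \<in> I \<Longrightarrow> w i > 0"
    and \<mu>: "\<And>i. i \<in> I \<Longrightarrow> \<mu> i > 0" and bal: "(\<Sum>i\<in>I. \<mu> i *\<^sub>R v i) = 0"
  obtains t where "\<And>s. (\<Sum>i\<in>I. w i * exp (inner (v i) t)) \<le> (\<Sum>i\<in>I. w i * exp (inner (v i) s))"
proof -
  define h where "h s = (\<Sum>i\<in>I. w i * exp (inner (v i) s))" for s
  obtain R where "R \<ge> 0 \<and>
      (\<forall>y\<in>span (v ` I). R < norm y \<longrightarrow> sum w I < (\<Sum>i\<in>I. w i * exp (inner (v i) y)))"
    using exp_sum_coercive[OF I w \<mu> bal] by (rule exE)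
  then have R: "R \<ge> 0"
    "\<forall>y\<in>span (v ` I). R < norm y \<longrightarrow> sum w I < (\<Sum>i\<in>I. w i * exp (inner (v i) y))"
    by simp_all
  have "cball 0 R \<noteq> {}"
    using R(1) by auto
  moreover have "continuous_on (cball 0 R) h"
    unfolding h_def by (intro continuous_intros)
  ultimately obtain t where t: "\<And>y. y \<in> cball 0 R \<Longrightarrow> h t \<le> h y"
    using continuous_attains_inf[OF compact_cball] by blast
  have "h t \<le> h s" for s
  proof -
    obtain y z where yz: "y \<in> span (v ` I)"
      "\<And>x. x \<in> span (v ` I) \<Longrightarrow> real_inner_class.orthogonal z x" "s = y + z"
      using orthogonal_subspace_decomp_exists by blast
    have "h s = h y"
      unfolding h_def yz(3) using yz(2) by (rule exp_sum_add_orthogonal)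
    moreover have "h t \<le> h y"
    proof (cases "norm y \<le> R")
      case False
      have "h t \<le> h 0"
        using t[of 0] R(1) by simp
      also have "\<dots> < h y"
        using R(2) yz(1) False by (simp add: h_def)
      finally show ?thesis
        by simp
    qed (use t in simp)
    ultimately show ?thesis
      by simp
  qed
  then show ?thesis
    using that unfolding h_def by blast
qed

lemma exp_sum_min_grad:
  fixes v :: "'b \<Rightarrow> 'a::real_inner"
  assumes "finite I"
    and min: "\<And>s. (\<Sum>i\<in>I. w i * exp (inner (v i) t)) \<le> (\<Sum>i\<in>I. w i * exp (inner (v i) s))"
  shows "(\<Sum>i\<in>I. w i * exp (inner (v i) t) * inner (v i) u) = 0"
proof -
  define \<phi> where "\<phi> r = (\<Sum>i\<in>I. w i * exp (inner (v i) t + r * inner (v i) u))" for r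
  have "(\<phi> has_real_derivative (\<Sum>i\<in>I. w i * exp (inner (v i) t) * inner (v i) u)) (at 0)"
    unfolding \<phi>_def by (auto intro!: derivative_eq_intros sum.cong simp: mult_ac)
  moreover have "\<phi> 0 \<le> \<phi> r" for r
    using min[of "t + r *\<^sub>R u"] by (simp add: \<phi>_def inner_add_right)
  ultimately show ?thesis
    by (intro DERIV_local_min[of \<phi> _ 0 1]) auto
qed

section \<open>Projection representations\<close>

locale representation =
  fixes k :: nat and X :: "nat \<Rightarrow> 'e::{finite,linorder} \<Rightarrow> real" and bases :: "'e set set"
  assumes rows_vanish: "\<And>i f. k \<le> i \<Longrightarrow> X i f = 0"
    and bases_iff: "\<And>B. B \<in> bases \<longleftrightarrow> card B = k \<and> det_k k (col_submat X B) \<noteq> 0"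
    and bases_nonempty: "bases \<noteq> {}"
begin

lemma card_bases: "B \<in> bases \<Longrightarrow> card B = k"
  using bases_iff by blast

lemma matroid_rank_eq: "matroid_rank bases = k"
proof -
  have "card ` bases = {k}"
    using bases_nonempty card_bases by blast
  then show ?thesis
    by (simp add: matroid_rank_def)
qed

sublocale independent_rows k X
proof -
  obtain B0 where "B0 \<in> bases"
    using bases_nonempty by blast
  then show "independent_rows k X"
    using rows_vanish bases_iff[of B0] by (intro independent_rows_if_minor_nonzero[of k X B0]) auto
qed

lemma sum_k_subsets_eq_sum_bases:
  "(\<Sum>B | card B = k \<and> P B. det_k k (col_submat X B) ^ 2)
     = (\<Sum>B\<in>{B\<in>bases. P B}. det_k k (col_submat X B) ^ 2)"
  using bases_iff by (intro sum.mono_neutral_right) auto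

lemma det_gram_eq_sum_bases: "det_k k (gram X) = (\<Sum>B\<in>bases. det_k k (col_submat X B) ^ 2)"
  using sum_k_subsets_eq_sum_bases[of "\<lambda>_. True"] by (simp add: det_gram)

lemma row_space_proj_diag_eq:
  "row_space_proj k X e e
     = (\<Sum>B\<in>{B\<in>bases. e \<in> B}. det_k k (col_submat X B) ^ 2) / (\<Sum>B\<in>bases. det_k k (col_submat X B) ^ 2)"
  by (simp add: row_space_proj_diag sum_k_subsets_eq_sum_bases det_gram_eq_sum_bases)

lemma projection_representation_row_space_proj:
  "projection_representation bases (row_space_proj k X)"
proof -
  have "det_k k (principal_submat (row_space_proj k X) B) \<noteq> 0 \<longleftrightarrow> B \<in> bases"
    if "card B = k" for B
    using that bases_iff[of B] det_gram_pos by (simp add: det_principal_submat_row_space_proj)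
  moreover have "row_space_proj k X e f = row_space_proj k X f e" for e f
    using fun_cong[OF fun_cong[OF mtransp_row_space_proj, of f], of e] by (simp add: mtransp_def)
  moreover have "(\<Sum>g\<in>UNIV. row_space_proj k X e g * row_space_proj k X g f) = row_space_proj k X e f"
    for e f
    using fun_cong[OF fun_cong[OF row_space_proj_idempotent, of e], of f] by (simp add: mat_prod_def)
  ultimately show ?thesis
    unfolding projection_representation_def matroid_rank_eq by blast
qed

end

lemma real_representable_imp_representation:
  assumes "real_representable bases" and "loopless bases"
  obtains k X where "representation k X bases"
proof -
  obtain k X0 where X0: "\<And>B. B \<in> bases \<longleftrightarrow> card B = k \<and> det_k k (col_submat X0 B) \<noteq> 0"
    using assms(1) unfolding real_representable_def by blast
  define X where "X i f = (if i < k then X0 i f else 0)" for i f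
  have det_X: "det_k k (col_submat X B) = det_k k (col_submat X0 B)" for B
    by (rule det_k_cong) (simp add: X_def col_submat_def)
  have "bases \<noteq> {}"
    using assms(2) unfolding loopless_def by blast
  then have "representation k X bases"
    by (intro representation.intro) (simp_all add: X_def X0 det_X)
  then show ?thesis
    by (rule that)
qed

section \<open>From uniform density to a projection representation\<close>

lemma inner_indicator_vec_minus_const:
  "inner (indicator_vec B - (\<chi> e. c)) t = (\<Sum>f\<in>B. vec_nth t f) - c * (\<Sum>f\<in>UNIV. vec_nth t f)"
proof -
  have "inner (indicator_vec B - (\<chi> e. c)) t
      = (\<Sum>f\<in>UNIV. (if f \<in> B then vec_nth t f else 0) - c * vec_nth t f)"
    unfolding inner_vec_def
    by (simp add: indicator_vec_def left_diff_distrib if_distrib[of "\<lambda>x. x * _"] cong: if_cong)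
  also have "\<dots> = (\<Sum>f\<in>B. vec_nth t f) - c * (\<Sum>f\<in>UNIV. vec_nth t f)"
    by (simp add: sum_subtractf sum.If_cases sum_distrib_left)
  finally show ?thesis .
qed

text \<open>Since \<open>\<chi> e. c\<close> is a strictly positive convex combination of the vectors \<open>indicator_vec B\<close>,
  the sum \<open>\<Sum>B. w B * exp (inner (indicator_vec B - (\<chi> e. c)) t)\<close> attains its minimum; the vanishing
  of its gradient there is the asserted identity.\<close>

lemma exists_exp_tilt_with_uniform_marginals:
  fixes bases :: "'e::finite set set" and w :: "'e set \<Rightarrow> real"
  assumes w: "\<And>B. B \<in> bases \<Longrightarrow> w B > 0"
    and ri: "(\<chi> e. c) \<in> rel_interior (base_polytope bases)"
  obtains t :: "'e \<Rightarrow> real" where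
    "\<And>e. (\<Sum>B\<in>{B\<in>bases. e \<in> B}. w B * exp (\<Sum>f\<in>B. t f))
        = c * (\<Sum>B\<in>bases. w B * exp (\<Sum>f\<in>B. t f))"
proof -
  obtain \<mu> where \<mu>: "\<forall>B\<in>bases. \<mu> B > 0" "sum \<mu> bases = 1"
    "(\<Sum>B\<in>bases. \<mu> B *\<^sub>R indicator_vec B) = (\<chi> e. c)"
    using ri rel_interior_base_polytope_iff by blast
  define v where "v B = indicator_vec B - (\<chi> e. c)" for B :: "'e set"
  have "(\<Sum>B\<in>bases. \<mu> B *\<^sub>R v B)
      = (\<Sum>B\<in>bases. \<mu> B *\<^sub>R indicator_vec B) - (\<Sum>B\<in>bases. \<mu> B) *\<^sub>R (\<chi> e. c)"
    by (simp add: v_def scaleR_diff_right sum_subtractf scaleR_sum_left)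
  then have "(\<Sum>B\<in>bases. \<mu> B *\<^sub>R v B) = 0"
    using \<mu>(2,3) by simp
  moreover have "bases \<noteq> {}"
    using \<mu>(2) by auto
  ultimately obtain t where t: "\<And>s. (\<Sum>B\<in>bases. w B * exp (inner (v B) t))
      \<le> (\<Sum>B\<in>bases. w B * exp (inner (v B) s))"
    using exp_sum_attains_min[of bases w \<mu> v] w \<mu>(1) by auto
  define p where "p B = w B * exp (\<Sum>f\<in>B. vec_nth t f)" for B
  define T where "T = (\<Sum>f\<in>UNIV. vec_nth t f)"
  have v_nth: "vec_nth (v B) e = (if e \<in> B then 1 else 0) - c" for B e
    by (simp add: v_def indicator_vec_def)
  have "exp (inner (v B) t) = exp (- c * T) * exp (\<Sum>f\<in>B. vec_nth t f)" for B
    unfolding v_def inner_indicator_vec_minus_const by (simp add: T_def mult_exp_exp algebra_simps)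
  then have exp_v: "w B * exp (inner (v B) t) = exp (- c * T) * p B" for B
    by (simp add: p_def mult_ac)
  have "(\<Sum>B\<in>bases. p B * ((if e \<in> B then 1 else 0) - c)) = 0" for e
  proof -
    have "(\<Sum>B\<in>bases. w B * exp (inner (v B) t) * inner (v B) (axis e 1)) = 0"
      by (rule exp_sum_min_grad[OF finite t])
    then have "exp (- c * T) * (\<Sum>B\<in>bases. p B * ((if e \<in> B then 1 else 0) - c)) = 0"
      by (simp add: exp_v inner_axis v_nth sum_distrib_left mult.assoc)
    then show ?thesis
      by simp
  qed
  then have "(\<Sum>B\<in>{B\<in>bases. e \<in> B}. p B) = c * sum p bases" for e
    by (simp add: right_diff_distrib sum_subtractf sum_distrib_left mult.commute sum.inter_filter
        if_distrib[of "\<lambda>x. _ * x"] cong: if_cong)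
  then show ?thesis
    using that[of "vec_nth t"] by (simp add: p_def)
qed

lemma det_col_submat_exp_scale:
  fixes X :: "nat \<Rightarrow> 'e::{finite,linorder} \<Rightarrow> real"
  assumes "card B = k"
  shows "det_k k (col_submat (\<lambda>i f. X i f * exp (t f / 2)) B) ^ 2
       = det_k k (col_submat X B) ^ 2 * exp (\<Sum>f\<in>B. t f)"
proof -
  have "(\<Prod>f\<in>B. exp (t f / 2)) ^ 2 = exp (\<Sum>f\<in>B. t f)"
    by (simp add: exp_sum[symmetric] power2_eq_square exp_add[symmetric] sum_divide_distrib[symmetric])
  then show ?thesis
    by (simp add: det_col_submat_scale[OF assms] power_mult_distrib)
qed

lemma (in representation) uniformly_dense_imp_projection_representation:
  assumes ri: "(\<chi> e. c) \<in> rel_interior (base_polytope bases)"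
  shows "\<exists>T. projection_representation bases T \<and> (\<forall>e. T e e = c)"
proof -
  have w: "det_k k (col_submat X B) ^ 2 > 0" if "B \<in> bases" for B
    using bases_iff[of B] that by simp
  obtain t where t: "\<And>e. (\<Sum>B\<in>{B\<in>bases. e \<in> B}. det_k k (col_submat X B) ^ 2 * exp (\<Sum>f\<in>B. t f))
      = c * (\<Sum>B\<in>bases. det_k k (col_submat X B) ^ 2 * exp (\<Sum>f\<in>B. t f))"
    using exists_exp_tilt_with_uniform_marginals[where w = "\<lambda>B. det_k k (col_submat X B) ^ 2", OF w ri]
    by blast
  define Y where "Y i f = X i f * exp (t f / 2)" for i f
  have minors_Y: "det_k k (col_submat Y B) ^ 2 = det_k k (col_submat X B) ^ 2 * exp (\<Sum>f\<in>B. t f)"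
    if "card B = k" for B
    unfolding Y_def by (rule det_col_submat_exp_scale[OF that])
  interpret Y: representation k Y bases
  proof
    show "Y i f = 0" if "k \<le> i" for i f
      using that by (simp add: Y_def rows_vanish)
    show "B \<in> bases \<longleftrightarrow> card B = k \<and> det_k k (col_submat Y B) \<noteq> 0" for B
      using bases_iff[of B] minors_Y[of B] by auto
  qed (fact bases_nonempty)
  have sums: "(\<Sum>B\<in>{B\<in>bases. P B}. det_k k (col_submat Y B) ^ 2)
      = (\<Sum>B\<in>{B\<in>bases. P B}. det_k k (col_submat X B) ^ 2 * exp (\<Sum>f\<in>B. t f))" for P
    by (intro sum.cong refl) (simp add: minors_Y card_bases)
  have "(\<Sum>B\<in>bases. det_k k (col_submat X B) ^ 2 * exp (\<Sum>f\<in>B. t f)) > 0"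
    using bases_nonempty w by (intro sum_pos) auto
  then have "row_space_proj k Y e e = c" for e
    using sums[of "\<lambda>B. e \<in> B"] sums[of "\<lambda>_. True", simplified] t[of e]
    by (simp add: Y.row_space_proj_diag_eq)
  then show ?thesis
    using Y.projection_representation_row_space_proj by blast
qed

section \<open>From a projection representation to uniform density\<close>

definition selected_rows :: "nat \<Rightarrow> ('e::linorder \<Rightarrow> 'f \<Rightarrow> real) \<Rightarrow> 'e set \<Rightarrow> nat \<Rightarrow> 'f \<Rightarrow> real" where
  "selected_rows k T B = (\<lambda>i f. if i < k then T (sorted_list_of_set B ! i) f else 0)"

lemma symmetric_idempotent_trace_zero:
  fixes Q :: "'e::finite \<Rightarrow> 'e \<Rightarrow> real"
  assumes sym: "\<And>e f. Q e f = Q f e" and idem: "mat_prod UNIV Q Q = Q"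
    and trace: "(\<Sum>e\<in>UNIV. Q e e) = 0"
  shows "Q e f = 0"
proof -
  have "(\<Sum>e\<in>UNIV. \<Sum>f\<in>UNIV. Q e f ^ 2) = (\<Sum>e\<in>UNIV. mat_prod UNIV Q Q e e)"
    by (simp add: mat_prod_def power2_eq_square sym[of _ e for e])
  also have "\<dots> = 0"
    using idem trace by simp
  finally have "\<forall>e\<in>UNIV. (\<Sum>f\<in>UNIV. Q e f ^ 2) = 0"
    by (subst sum_nonneg_eq_0_iff[symmetric]) (simp_all add: sum_nonneg)
  then show ?thesis
    using sum_nonneg_eq_0_iff[of UNIV "\<lambda>f. Q e f ^ 2"] by simp
qed

lemma selected_rows_fixed:
  fixes T :: "'e::{finite,linorder} \<Rightarrow> 'e \<Rightarrow> real"
  assumes sym: "\<And>e f. T e f = T f e" and idem: "\<And>e f. (\<Sum>g\<in>UNIV. T e g * T g f) = T e f"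
  shows "mat_prod UNIV T (mtransp (selected_rows k T B)) = mtransp (selected_rows k T B)"
proof (intro ext)
  fix e i
  define b where "b = sorted_list_of_set B ! i"
  have "(\<Sum>g\<in>UNIV. T e g * T b g) = T b e"
    using idem[of e b] by (simp add: sym[of b])
  then show "mat_prod UNIV T (mtransp (selected_rows k T B)) e i = mtransp (selected_rows k T B) e i"
    by (simp add: mat_prod_def mtransp_def selected_rows_def b_def)
qed

lemma independent_selected_rows:
  fixes T :: "'e::{finite,linorder} \<Rightarrow> 'e \<Rightarrow> real"
  assumes sym: "\<And>e f. T e f = T f e" and idem: "\<And>e f. (\<Sum>g\<in>UNIV. T e g * T g f) = T e f"
    and "det_k k (principal_submat T B) \<noteq> 0"
  shows "independent_rows k (selected_rows k T B)"
proof
  have "gram (selected_rows k T B) i j = principal_submat T B i j" if "i < k" "j < k" for i j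
  proof -
    define a b where "a = sorted_list_of_set B ! i" and "b = sorted_list_of_set B ! j"
    have "(\<Sum>g\<in>UNIV. T a g * T b g) = T a b"
      using idem[of a b] by (simp add: sym[of b])
    then show ?thesis
      using that by (simp add: gram_def mat_prod_def mtransp_def selected_rows_def principal_submat_def a_def b_def)
  qed
  then have "det_k k (gram (selected_rows k T B)) = det_k k (principal_submat T B)"
    by (rule det_k_cong)
  then show "det_k k (gram (selected_rows k T B)) \<noteq> 0"
    using assms(3) by simp
qed (simp add: selected_rows_def)

lemma projection_eq_row_space_proj:
  fixes T :: "'e::{finite,linorder} \<Rightarrow> 'e \<Rightarrow> real"
  assumes sym: "\<And>e f. T e f = T f e" and idem: "\<And>e f. (\<Sum>g\<in>UNIV. T e g * T g f) = T e f"
    and trace: "(\<Sum>e\<in>UNIV. T e e) = real k"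
    and minor: "det_k k (principal_submat T B) \<noteq> 0"
  shows "T = row_space_proj k (selected_rows k T B)"
proof -
  define Y where "Y = selected_rows k T B"
  define P where "P = row_space_proj k Y"
  interpret independent_rows k Y
    unfolding Y_def using sym idem minor by (rule independent_selected_rows)
  have TT: "mat_prod UNIV T T = T"
    by (intro ext) (simp add: mat_prod_def idem)
  have "mat_prod UNIV T P = mat_prod {..<k} (mat_prod {..<k} (mat_prod UNIV T (mtransp Y)) (inv_k k (gram Y))) Y"
    by (simp add: P_def row_space_proj_def mat_prod_assoc)
  then have TP: "mat_prod UNIV T P = P"
    using selected_rows_fixed[OF sym idem] by (simp add: P_def Y_def row_space_proj_def)
  have "mat_prod UNIV P T = mtransp (mat_prod UNIV (mtransp T) (mtransp P))"
    by (simp add: mtransp_mat_prod)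
  also have "mtransp T = T"
    by (intro ext) (simp add: mtransp_def sym)
  finally have PT: "mat_prod UNIV P T = P"
    using TP mtransp_row_space_proj by (simp add: P_def)
  define Q where "Q e f = T e f - P e f" for e f
  have Q_sym: "Q e f = Q f e" for e f
    using sym[of e f] fun_cong[OF fun_cong[OF mtransp_row_space_proj, of f], of e]
    by (simp add: Q_def P_def mtransp_def)
  have "mat_prod UNIV Q Q e f
      = mat_prod UNIV T T e f - mat_prod UNIV T P e f - mat_prod UNIV P T e f + mat_prod UNIV P P e f"
    for e f
    by (simp add: Q_def mat_prod_def algebra_simps sum_subtractf sum.distrib)
  then have Q_idem: "mat_prod UNIV Q Q = Q"
    using row_space_proj_idempotent[folded P_def] by (intro ext) (simp add: TT TP PT Q_def)
  have Q_trace: "(\<Sum>e\<in>UNIV. Q e e) = 0"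
    using trace trace_row_space_proj by (simp add: Q_def P_def sum_subtractf)
  have "Q e f = 0" for e f
    using Q_sym Q_idem Q_trace by (rule symmetric_idempotent_trace_zero)
  then show ?thesis
    by (intro ext) (simp add: Q_def P_def Y_def)
qed

lemma projection_representation_imp_uniformly_dense:
  fixes bases :: "'e::{finite,linorder} set set"
  assumes ne: "bases \<noteq> {}" and card: "\<And>B. B \<in> bases \<Longrightarrow> card B = k"
    and PR: "projection_representation bases T"
    and diag: "\<And>e. T e e = real k / real CARD('e)"
  shows "(\<chi> e. real k / real CARD('e)) \<in> rel_interior (base_polytope bases)"
proof -
  obtain B0 where B0: "B0 \<in> bases"
    using ne by blast
  have "card ` bases = {k}"
    using ne card by blast
  then have "matroid_rank bases = k"
    by (simp add: matroid_rank_def)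
  then have sym: "\<And>e f. T e f = T f e" and idem: "\<And>e f. (\<Sum>g\<in>UNIV. T e g * T g f) = T e f"
    and minors: "\<And>B. card B = k \<Longrightarrow> det_k k (principal_submat T B) \<noteq> 0 \<longleftrightarrow> B \<in> bases"
    using PR by (auto simp: projection_representation_def)
  have trace: "(\<Sum>e\<in>UNIV. T e e) = real k"
    by (simp add: diag)
  define Y where "Y = selected_rows k T B0"
  have minor_B0: "det_k k (principal_submat T B0) \<noteq> 0"
    using minors[OF card[OF B0]] B0 by simp
  interpret independent_rows k Y
    unfolding Y_def using sym idem minor_B0 by (rule independent_selected_rows)
  have T_eq: "T = row_space_proj k Y"
    unfolding Y_def using sym idem trace minor_B0 by (rule projection_eq_row_space_proj)
  interpret Y: representation k Y bases
  proof
    show "B \<in> bases \<longleftrightarrow> card B = k \<and> det_k k (col_submat Y B) \<noteq> 0" for B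
      using minors[of B] card[of B] det_gram_nonzero
      by (auto simp: T_eq det_principal_submat_row_space_proj)
  qed (simp_all add: Y_def selected_rows_def ne)
  define \<mu> where "\<mu> B = det_k k (col_submat Y B) ^ 2 / (\<Sum>B\<in>bases. det_k k (col_submat Y B) ^ 2)" for B
  have "\<mu> B > 0" if "B \<in> bases" for B
    using that Y.bases_iff[of B] det_gram_pos by (simp add: \<mu>_def Y.det_gram_eq_sum_bases[symmetric])
  moreover have "sum \<mu> bases = 1"
    using det_gram_nonzero by (simp add: \<mu>_def sum_divide_distrib[symmetric] Y.det_gram_eq_sum_bases[symmetric])
  moreover have "(\<Sum>B\<in>{B\<in>bases. e \<in> B}. \<mu> B) = real k / real CARD('e)" for e
    using Y.row_space_proj_diag_eq[of e] diag[of e] by (simp add: \<mu>_def sum_divide_distrib T_eq)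
  ultimately show ?thesis
    using const_in_rel_interior_base_polytope_iff by blast
qed

theorem theorem4p10:
  fixes bases :: "('e::{finite,linorder}) set set"
  assumes "real_representable bases"
    and "loopless bases"
  shows "strictly_uniformly_dense bases \<longleftrightarrow>
    (\<exists>T. projection_representation bases T \<and> (\<forall>e. T e e = inverse (density bases)))"
proof -
  obtain k X where "representation k X bases"
    using assms by (rule real_representable_imp_representation)
  then interpret representation k X bases .
  have density: "inverse (density bases) = real k / real CARD('e)"
    by (simp add: density_def matroid_rank_eq)
  show ?thesis
    unfolding strictly_uniformly_dense_def density
  proof
    assume "(\<chi> e. real k / real CARD('e)) \<in> rel_interior (base_polytope bases)"
    then show "\<exists>T. projection_representation bases T \<and> (\<forall>e. T e e = real k / real CARD('e))"
      by (rule uniformly_dense_imp_projection_representation)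
  next
    assume "\<exists>T. projection_representation bases T \<and> (\<forall>e. T e e = real k / real CARD('e))"
    then show "(\<chi> e. real k / real CARD('e)) \<in> rel_interior (base_polytope bases)"
      using projection_representation_imp_uniformly_dense[OF bases_nonempty card_bases] by blast
  qed
qed

end
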